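(* A relaxed binary tree $C$ is a compacted binary tree if and only if there are no two distinct vertices $u\neq v$ of $C$ having the same left out-neighbour and the same right out-neighbour. Moreover, if $C$ is not a compacted tree, then such a pair $(u,v)$ exists in which $v$ is a cherry and $u$ precedes $v$ in postorder.
   Context: A (rooted, plane) binary tree is either a leaf or an internal node with an ordered pair (left, right) of binary subtrees; postorder visits left subtree, right subtree, then root. A relaxed binary tree of size $n$ is obtained from a binary tree $T$ with $n$ internal nodes (its spine) by keeping the left-most leaf and turning every other leaf $\ell$ into a pointer to a vertex of $T$ which is an internal node or the left-most leaf and which precedes $\ell$ in postorder. It is regarded as a directed acyclic graph whose vertices are the internal nodes of $T$ and the left-most leaf; each internal node has a left and a right out-edge, going to the corresponding child in $T$ if that child is an internal node or the left-most leaf, and otherwise to the target of the pointer replacing that child (the endpoints of these edges are the left and right out-neighbours, or children, of the node in $C$). For each vertex $u$ define a binary tree $B(u)$: a single leaf if $u$ is the left-most leaf, otherwise the binary tree with left subtree $B(v)$ and right subtree $B(w)$, where $v,w$ are the left and right out-neighbours of $u$. A compacted binary tree is a relaxed binary tree with $B(u)$ not isomorphic to $B(v)$ for all distinct vertices $u\ne v$. An internal node is a cherry if both of its children in the spine $T$ are leaves and neither of them is the left-most leaf. *)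

theory Defs
  imports Main
begin

text \<open>Plane binary trees (used both for the spine T and for the trees B(u)).\<close>
datatype bt = Leaf | Node bt bt

text \<open>Positions in a tree are paths from the root: False = go left, True = go right.\<close>
type_synonym pos = "bool list"

fun subt :: "bt \<Rightarrow> pos \<Rightarrow> bt option" where
  "subt t [] = Some t"
| "subt Leaf (_ # _) = None"
| "subt (Node l r) (b # p) = subt (if b then r else l) p"

fun postorder :: "bt \<Rightarrow> pos list" where
  "postorder Leaf = [[]]"
| "postorder (Node l r) = map (Cons False) (postorder l) @ map (Cons True) (postorder r) @ [[]]"

definition precedes :: "bt \<Rightarrow> pos \<Rightarrow> pos \<Rightarrow> bool" where
  "precedes T a b \<longleftrightarrow> (\<exists>i j. i < j \<and> j < length (postorder T) \<and>
      postorder T ! i = a \<and> postorder T ! j = b)"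

definition is_internal :: "bt \<Rightarrow> pos \<Rightarrow> bool" where
  "is_internal T p \<longleftrightarrow> (\<exists>l r. subt T p = Some (Node l r))"

definition is_leaf :: "bt \<Rightarrow> pos \<Rightarrow> bool" where
  "is_leaf T p \<longleftrightarrow> subt T p = Some Leaf"

definition leftmost :: "bt \<Rightarrow> pos" where
  "leftmost T = hd (postorder T)"

definition is_vertex :: "bt \<Rightarrow> pos \<Rightarrow> bool" where
  "is_vertex T p \<longleftrightarrow> is_internal T p \<or> p = leftmost T"

text \<open>A relaxed binary tree is given by its spine T and a pointer function ptr, which
  maps every leaf other than the left-most one to a vertex preceding it in postorder.
  (Values of ptr at other positions are irrelevant.)\<close>
definition relaxed :: "bt \<Rightarrow> (pos \<Rightarrow> pos) \<Rightarrow> bool" where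
  "relaxed T ptr \<longleftrightarrow> (\<forall>l. is_leaf T l \<and> l \<noteq> leftmost T \<longrightarrow>
      is_vertex T (ptr l) \<and> precedes T (ptr l) l)"

text \<open>Out-neighbour of an internal node u in direction b (False = left, True = right).\<close>
definition child :: "bt \<Rightarrow> (pos \<Rightarrow> pos) \<Rightarrow> pos \<Rightarrow> bool \<Rightarrow> pos" where
  "child T ptr u b = (let c = u @ [b] in if is_vertex T c then c else ptr c)"

abbreviation lchild where "lchild T ptr u \<equiv> child T ptr u False"
abbreviation rchild where "rchild T ptr u \<equiv> child T ptr u True"

text \<open>B(u), as the relation "B(u) = t" (it is a total function on vertices of a relaxed tree).\<close>
inductive Btree :: "bt \<Rightarrow> (pos \<Rightarrow> pos) \<Rightarrow> pos \<Rightarrow> bt \<Rightarrow> bool" for T ptr where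
  B_leaf: "Btree T ptr (leftmost T) Leaf"
| B_node: "is_internal T u \<Longrightarrow> Btree T ptr (lchild T ptr u) a \<Longrightarrow> Btree T ptr (rchild T ptr u) b
           \<Longrightarrow> Btree T ptr u (Node a b)"

definition compacted :: "bt \<Rightarrow> (pos \<Rightarrow> pos) \<Rightarrow> bool" where
  "compacted T ptr \<longleftrightarrow> relaxed T ptr \<and>
     (\<forall>u v. is_vertex T u \<and> is_vertex T v \<and> u \<noteq> v \<longrightarrow>
        (\<forall>a b. Btree T ptr u a \<and> Btree T ptr v b \<longrightarrow> a \<noteq> b))"

definition cherry :: "bt \<Rightarrow> pos \<Rightarrow> bool" where
  "cherry T v \<longleftrightarrow> subt T v = Some (Node Leaf Leaf) \<and>
      v @ [False] \<noteq> leftmost T \<and> v @ [True] \<noteq> leftmost T"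

end

theory Submission imports Defs begin

text \<open>
Two internal nodes with the same pair of out-neighbours have the same B-tree, so such a pair
prevents compactness. Conversely, among all pairs of vertices u, v with equal B-trees and u
preceding v in postorder, take one with v minimal. The children of u and v then have equal
B-trees and all precede v, so by minimality u and v share their children. Since every edge points
backwards in postorder, a spine child of v that is a vertex would have to lie before u, which
lies before v; nothing lies strictly between v and its right child, and everything strictly
between v and its left child lies in the right subtree of v, which would make the right child an
internal node. Hence both spine children of v are leaves other than the left-most one.
\<close>

fun occurs_before :: "'a list \<Rightarrow> 'a \<Rightarrow> 'a \<Rightarrow> bool" where
  "occurs_before [] a b = False"
| "occurs_before (x # xs) a b \<longleftrightarrow> (x = a \<and> b \<in> set xs) \<or> occurs_before xs a b"

lemma ex_less_Suc_cases:
  "(\<exists>i j. i < j \<and> P i j) \<longleftrightarrow> (\<exists>j. P 0 (Suc j)) \<or> (\<exists>i j. i < j \<and> P (Suc i) (Suc j))"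
proof
  assume "\<exists>i j. i < j \<and> P i j"
  then obtain i j where "i < j" "P i j"
    by blast
  moreover obtain j' where "j = Suc j'"
    using \<open>i < j\<close> less_imp_Suc_add by blast
  ultimately show "(\<exists>j. P 0 (Suc j)) \<or> (\<exists>i j. i < j \<and> P (Suc i) (Suc j))"
    by (cases i) auto
qed blast

lemma occurs_before_iff_nth:
  "occurs_before xs a b \<longleftrightarrow> (\<exists>i j. i < j \<and> j < length xs \<and> xs ! i = a \<and> xs ! j = b)"
proof (induction xs)
  case (Cons x xs)
  show ?case
    by (subst ex_less_Suc_cases) (auto simp: Cons in_set_conv_nth)
qed simp

lemma occurs_before_append:
  "occurs_before (xs @ ys) a b \<longleftrightarrow>
     occurs_before xs a b \<or> occurs_before ys a b \<or> (a \<in> set xs \<and> b \<in> set ys)"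
  by (induction xs) auto

lemma occurs_before_map:
  "inj f \<Longrightarrow> occurs_before (map f xs) a b \<longleftrightarrow> (\<exists>a' b'. a = f a' \<and> b = f b' \<and> occurs_before xs a' b')"
  by (induction xs) (auto simp: inj_eq)

fun post_less :: "pos \<Rightarrow> pos \<Rightarrow> bool" where
  "post_less [] q = False"
| "post_less (x # p) [] = True"
| "post_less (x # p) (y # q) = (if x = y then post_less p q else \<not> x \<and> y)"

lemma post_less_irrefl: "\<not> post_less p p"
  by (induction p) auto

lemma post_less_trans: "post_less p q \<Longrightarrow> post_less q r \<Longrightarrow> post_less p r"
proof (induction p arbitrary: q r)
  case (Cons x p)
  then show ?case by (cases q; cases r) (auto split: if_splits)
qed simp

lemma post_less_total: "p \<noteq> q \<Longrightarrow> post_less p q \<or> post_less q p"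
proof (induction p arbitrary: q)
  case Nil
  then show ?case by (cases q) auto
next
  case (Cons x p)
  then show ?case by (cases q) auto
qed

lemma post_less_descendant: "q \<noteq> [] \<Longrightarrow> post_less (p @ q) p"
  by (induction p) (auto simp: neq_Nil_conv)

lemma post_less_between_left_child:
  "post_less (v @ [False]) p \<Longrightarrow> post_less p v \<Longrightarrow> \<exists>q. p = v @ True # q"
proof (induction v arbitrary: p)
  case Nil
  then show ?case by (cases p) (auto split: if_splits)
next
  case (Cons x v)
  then show ?case by (cases p) (auto split: if_splits)
qed

lemma post_less_between_right_child: "post_less (v @ [True]) p \<Longrightarrow> \<not> post_less p v"
proof (induction v arbitrary: p)
  case Nil
  then show ?case by (cases p) (auto split: if_splits)
next
  case (Cons x v)
  then show ?case by (cases p) (auto split: if_splits)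
qed

lemma subt_append: "subt T (p @ q) = (case subt T p of None \<Rightarrow> None | Some t \<Rightarrow> subt t q)"
proof (induction p arbitrary: T)
  case (Cons b p)
  then show ?case by (cases T) auto
qed simp

lemma set_postorder: "set (postorder T) = {p. subt T p \<noteq> None}"
proof (induction T)
  case Leaf
  then show ?case by (auto elim: subt.elims)
next
  case (Node l r)
  show ?case
  proof (rule set_eqI)
    fix p
    show "p \<in> set (postorder (Node l r)) \<longleftrightarrow> p \<in> {p. subt (Node l r) p \<noteq> None}"
      using Node by (cases p) auto
  qed
qed

lemma occurs_before_postorder:
  "occurs_before (postorder T) p q \<longleftrightarrow> subt T p \<noteq> None \<and> subt T q \<noteq> None \<and> post_less p q"
proof (induction T arbitrary: p q)
  case Leaf
  then show ?case by (cases p; cases q) auto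
next
  case (Node l r)
  have "inj (Cons b)" for b :: bool
    by (simp add: inj_def)
  then show ?case
    using Node by (cases p; cases q) (auto simp: occurs_before_append occurs_before_map set_postorder)
qed

lemma precedes_iff_post_less:
  "precedes T p q \<longleftrightarrow> subt T p \<noteq> None \<and> subt T q \<noteq> None \<and> post_less p q"
  unfolding precedes_def occurs_before_iff_nth[symmetric] occurs_before_postorder ..

lemma precedes_irrefl: "\<not> precedes T p p"
  by (simp add: precedes_iff_post_less post_less_irrefl)

lemma precedes_trans: "precedes T p q \<Longrightarrow> precedes T q r \<Longrightarrow> precedes T p r"
  by (auto simp: precedes_iff_post_less intro: post_less_trans)

lemma wf_precedes: "wf {(p, q). precedes T p q}"
proof (rule finite_acyclic_wf)
  have "{(p, q). precedes T p q} \<subseteq> set (postorder T) \<times> set (postorder T)"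
    by (auto simp: precedes_iff_post_less set_postorder)
  then show "finite {(p, q). precedes T p q}"
    by (rule finite_subset) simp
  have "trans {(p, q). precedes T p q}"
    by (auto simp: trans_def intro: precedes_trans)
  then show "acyclic {(p, q). precedes T p q}"
    by (simp add: acyclic_def precedes_irrefl)
qed

lemma is_internal_subt: "is_internal T p \<Longrightarrow> subt T p \<noteq> None"
  by (auto simp: is_internal_def)

lemma is_internal_child_subt: "is_internal T p \<Longrightarrow> subt T (p @ [b]) \<noteq> None"
  by (auto simp: is_internal_def subt_append)

lemma is_internal_prefix: "is_internal T (p @ q) \<Longrightarrow> is_internal T p"
  by (cases "subt T p"; cases q) (auto simp: is_internal_def subt_append elim: subt.elims)

lemma precedes_child: "is_internal T p \<Longrightarrow> precedes T (p @ [b]) p"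
  by (simp add: precedes_iff_post_less is_internal_subt is_internal_child_subt post_less_descendant)

lemma not_internal_is_leaf: "subt T p \<noteq> None \<Longrightarrow> \<not> is_internal T p \<Longrightarrow> subt T p = Some Leaf"
  by (cases "subt T p") (auto simp: is_internal_def intro: bt.exhaust)

lemma child_vertex_precedes:
  assumes "relaxed T ptr" "is_internal T u"
  shows "is_vertex T (child T ptr u b) \<and> precedes T (child T ptr u b) u"
proof (cases "is_vertex T (u @ [b])")
  case True
  then show ?thesis
    using assms(2) by (simp add: child_def precedes_child)
next
  case False
  then have "is_leaf T (u @ [b])" "u @ [b] \<noteq> leftmost T"
    using not_internal_is_leaf[OF is_internal_child_subt[OF assms(2)]]
    by (auto simp: is_vertex_def is_leaf_def)
  then have "is_vertex T (ptr (u @ [b])) \<and> precedes T (ptr (u @ [b])) (u @ [b])"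
    using assms(1) by (simp add: relaxed_def)
  then show ?thesis
    using False precedes_child[OF assms(2)] precedes_trans by (auto simp: child_def)
qed

inductive_cases Btree_LeafE: "Btree T ptr u Leaf"
inductive_cases Btree_NodeE: "Btree T ptr u (Node a b)"

lemma Btree_exists:
  assumes rel: "relaxed T ptr" and "is_vertex T u"
  shows "\<exists>t. Btree T ptr u t"
  using wf_precedes[of T] assms(2)
proof (induction u rule: wf_induct_rule)
  case (less u)
  show ?case
  proof (cases "u = leftmost T")
    case True
    then show ?thesis
      using Btree.B_leaf by blast
  next
    case False
    then have u: "is_internal T u"
      using less.prems by (simp add: is_vertex_def)
    then obtain s t where "Btree T ptr (lchild T ptr u) s" "Btree T ptr (rchild T ptr u) t"
      using less.IH child_vertex_precedes[OF rel u] by blast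
    then show ?thesis
      using Btree.B_node[OF u] by blast
  qed
qed

lemma Btree_eq_internal:
  assumes "Btree T ptr u t" "Btree T ptr v t" "u \<noteq> v"
  shows "is_internal T u \<and> is_internal T v"
  using assms by (cases t) (auto elim: Btree_LeafE Btree_NodeE)

lemma Btree_eq_precedes:
  assumes "Btree T ptr u t" "Btree T ptr v t" "u \<noteq> v"
  shows "precedes T u v \<or> precedes T v u"
  using Btree_eq_internal[OF assms] assms(3) post_less_total[of u v]
  by (auto simp: precedes_iff_post_less is_internal_subt)

lemma shared_children_not_compacted:
  assumes rel: "relaxed T ptr" and u: "is_internal T u" and v: "is_internal T v" and "u \<noteq> v"
    and "lchild T ptr u = lchild T ptr v" "rchild T ptr u = rchild T ptr v"
  shows "\<not> compacted T ptr"
proof -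
  obtain s t where "Btree T ptr (lchild T ptr u) s" "Btree T ptr (rchild T ptr u) t"
    using Btree_exists[OF rel] child_vertex_precedes[OF rel u] by blast
  then have "Btree T ptr u (Node s t)" "Btree T ptr v (Node s t)"
    using assms by (auto intro: Btree.B_node)
  then show ?thesis
    using assms by (auto simp: compacted_def is_vertex_def)
qed

lemma equal_Btree_shared_childrenE:
  assumes rel: "relaxed T ptr" and "precedes T u v" "Btree T ptr u t" "Btree T ptr v t"
  obtains x y where "is_internal T x" "is_internal T y" "precedes T x y"
    "lchild T ptr x = lchild T ptr y" "rchild T ptr x = rchild T ptr y"
proof -
  let ?later = "{y. \<exists>x t. precedes T x y \<and> Btree T ptr x t \<and> Btree T ptr y t}"
  obtain y where "y \<in> ?later" and minimal: "\<And>z. precedes T z y \<Longrightarrow> z \<notin> ?later"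
  proof (rule wfE_min[OF wf_precedes[of T], of v ?later])
    show "v \<in> ?later"
      using assms by blast
  qed auto
  then obtain x t where xy: "precedes T x y" "Btree T ptr x t" "Btree T ptr y t"
    by blast
  then have x: "is_internal T x" and y: "is_internal T y"
    using Btree_eq_internal precedes_irrefl by metis+
  have shared: "child T ptr x b = child T ptr y b"
    if "Btree T ptr (child T ptr x b) s" "Btree T ptr (child T ptr y b) s" for b s
  proof (rule ccontr)
    assume "child T ptr x b \<noteq> child T ptr y b"
    then have "precedes T (child T ptr x b) (child T ptr y b) \<or>
        precedes T (child T ptr y b) (child T ptr x b)"
      using Btree_eq_precedes that by blast
    moreover have "precedes T (child T ptr x b) y" "precedes T (child T ptr y b) y"
      using child_vertex_precedes[OF rel x] child_vertex_precedes[OF rel y] xy(1) precedes_trans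
      by blast+
    ultimately show False
      using minimal that by blast
  qed
  obtain t1 t2 where "t = Node t1 t2"
    using xy by (cases t) (auto elim!: Btree_LeafE simp: precedes_irrefl)
  then have "Btree T ptr (lchild T ptr x) t1" "Btree T ptr (rchild T ptr x) t2"
      "Btree T ptr (lchild T ptr y) t1" "Btree T ptr (rchild T ptr y) t2"
    using xy(2,3) by (auto elim: Btree_NodeE)
  then show thesis
    using that x y xy(1) shared by blast
qed

lemma shared_children_imp_cherry:
  assumes rel: "relaxed T ptr" and u: "is_internal T u" and v: "is_internal T v"
    and uv: "precedes T u v"
    and "lchild T ptr u = lchild T ptr v" "rchild T ptr u = rchild T ptr v"
  shows "cherry T v"
proof -
  have child_before_u: "precedes T (child T ptr v b) u" for b
    using child_vertex_precedes[OF rel u, of b] assms(5,6) by (cases b) auto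
  have right: "\<not> is_vertex T (v @ [True])"
  proof
    assume "is_vertex T (v @ [True])"
    then have "precedes T (v @ [True]) u"
      using child_before_u[of True] by (simp add: child_def)
    then show False
      using uv post_less_between_right_child by (simp add: precedes_iff_post_less)
  qed
  have left: "\<not> is_vertex T (v @ [False])"
  proof
    assume "is_vertex T (v @ [False])"
    then have "post_less (v @ [False]) u" "post_less u v"
      using child_before_u[of False] uv by (simp_all add: child_def precedes_iff_post_less)
    then obtain q where "u = (v @ [True]) @ q"
      using post_less_between_left_child by fastforce
    then have "is_internal T (v @ [True])"
      using u is_internal_prefix by blast
    then show False
      using right by (simp add: is_vertex_def)
  qed
  have leaf: "subt T (v @ [b]) = Some Leaf" for b
    using left right not_internal_is_leaf[OF is_internal_child_subt[OF v]]
    by (cases b) (simp_all add: is_vertex_def)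
  obtain l r where lr: "subt T v = Some (Node l r)"
    using v by (auto simp: is_internal_def)
  then have "l = Leaf" "r = Leaf"
    using leaf[of False] leaf[of True] by (simp_all add: subt_append)
  then show ?thesis
    using lr left right by (simp add: cherry_def is_vertex_def)
qed

theorem proposition2p8:
  assumes "relaxed T ptr"
  shows "(compacted T ptr \<longleftrightarrow>
            \<not> (\<exists>u v. is_internal T u \<and> is_internal T v \<and> u \<noteq> v \<and>
                   lchild T ptr u = lchild T ptr v \<and> rchild T ptr u = rchild T ptr v))
       \<and> (\<not> compacted T ptr \<longrightarrow>
            (\<exists>u v. is_internal T u \<and> is_internal T v \<and> u \<noteq> v \<and>
                   lchild T ptr u = lchild T ptr v \<and> rchild T ptr u = rchild T ptr v \<and>
                   cherry T v \<and> precedes T u v))"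
proof -
  have "\<exists>u v. is_internal T u \<and> is_internal T v \<and> u \<noteq> v \<and>
              lchild T ptr u = lchild T ptr v \<and> rchild T ptr u = rchild T ptr v \<and>
              cherry T v \<and> precedes T u v"
    if not_compacted: "\<not> compacted T ptr"
  proof -
    obtain x y t where "x \<noteq> y" "Btree T ptr x t" "Btree T ptr y t"
      using not_compacted assms by (auto simp: compacted_def)
    then obtain u v where "precedes T u v" "Btree T ptr u t" "Btree T ptr v t"
      using Btree_eq_precedes by blast
    then obtain u v where "is_internal T u" "is_internal T v" "precedes T u v"
        "lchild T ptr u = lchild T ptr v" "rchild T ptr u = rchild T ptr v"
      using equal_Btree_shared_childrenE[OF assms] by blast
    then show ?thesis
      using shared_children_imp_cherry[OF assms] precedes_irrefl by metis
  qed
  then show ?thesis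
    using shared_children_not_compacted[OF assms] by blast
qed

end
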